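(* Let $0<c\le1<F$ and $s>0$. There exist constants $a_1,a_2,b>0$ depending only on $c$ such that at every time $t$ with $Z^t>0$, $$\mathbb E[Z^t-Z^{t+1}\mid x^t,\lambda^t]\ge \Pr[B\mid x^t,\lambda^t]\cdot a_1\big(1-c(1-Z^t/n)\big)-a_2e^{-b\lambda^t}.$$ This also holds with $Z^t-Z^{t+1}$ replaced by $\min\{1,Z^t-Z^{t+1}\}$.
   Context: Consider the SA-$(1,\lambda)$-EA on a dynamic monotone function: a function $f:\{0,1\}^n\to\mathbb R$ is monotone if $f(x)>f(y)$ whenever $x\ne y$ and $x_i\ge y_i$ for all $i$; $(f^t)_{t\ge0}$ is a sequence of monotone functions, $f^t$ possibly chosen adversarially depending on $x^t$. The algorithm (with constants $c>0$, $s>0$, $F>1$) maintains $x^t\in\{0,1\}^n$, real $\lambda^t\ge1$; in generation $t$ it creates $\lfloor\lambda^t\rceil$ (nearest integer) offspring $y^{t,j}$, each independently by flipping every bit of $x^t$ independently with probability $c/n$; $x^{t+1}$ is an offspring maximizing $f^t$ (ties uniformly at random); $\lambda^{t+1}=\max\{1,\lambda^t/F\}$ if $f^t(x^{t+1})>f^t(x^t)$, else $\lambda^{t+1}=F^{1/s}\lambda^t$. $Z^t$ is the number of zero-bits of $x^t$. $B$ is the event that some offspring of $x^t$ flips at least one zero-bit of $x^t$. *)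

theory Defs
  imports "HOL-Probability.Probability"
begin

text \<open>Bit strings of length n are bool lists of length n; False = zero-bit, True = one-bit.\<close>

fun iid_list :: "'a pmf \<Rightarrow> nat \<Rightarrow> 'a list pmf" where
  "iid_list p 0 = return_pmf []"
| "iid_list p (Suc k) = bind_pmf p (\<lambda>a. bind_pmf (iid_list p k) (\<lambda>as. return_pmf (a # as)))"

definition zeros :: "bool list \<Rightarrow> nat" where
  "zeros x = length (filter Not x)"

definition flip :: "bool list \<Rightarrow> bool list \<Rightarrow> bool list" where
  "flip x m = map2 (\<noteq>) x m"

definition monotone_pb :: "nat \<Rightarrow> (bool list \<Rightarrow> real) \<Rightarrow> bool" where
  "monotone_pb n f \<longleftrightarrow> (\<forall>x y. length x = n \<longrightarrow> length y = n \<longrightarrow> x \<noteq> y \<longrightarrow>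
      (\<forall>i<n. y ! i \<longrightarrow> x ! i) \<longrightarrow> f x > f y)"

definition select_best :: "(bool list \<Rightarrow> real) \<Rightarrow> bool list list \<Rightarrow> bool list pmf" where
  "select_best f ys = map_pmf (\<lambda>j. ys ! j)
     (pmf_of_set {j. j < length ys \<and> (\<forall>i<length ys. f (ys ! i) \<le> f (ys ! j))})"

text \<open>One generation of the SA-(1,lambda)-EA with mutation rate c/n, from parent x, offspring
  population size round(lambda), fitness f.\<close>
definition ea_step :: "real \<Rightarrow> nat \<Rightarrow> bool list \<Rightarrow> real \<Rightarrow> (bool list \<Rightarrow> real)
    \<Rightarrow> (bool list list \<times> bool list) pmf" where
  "ea_step c n x lam f =
     bind_pmf (iid_list (iid_list (bernoulli_pmf (c / real n)) n) (nat (round lam)))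
       (\<lambda>ms. map_pmf (\<lambda>x'. (ms, x')) (select_best f (map (flip x) ms)))"

definition event_B :: "nat \<Rightarrow> bool list \<Rightarrow> bool list list set" where
  "event_B n x = {ms. \<exists>m\<in>set ms. \<exists>i<n. \<not> x ! i \<and> m ! i}"

end

theory Submission
  imports Defs
begin

text \<open>Let p = c/n, let k = round lambda be the number of offspring and J the set of one-bits of
  x. If the selected offspring arises from the mask m, then Z^t - Z^(t+1) is the number of zero-bits
  minus the number of one-bits flipped by m, which is at least [m flips a zero-bit] minus the number
  of one-bits flipped by m; both terms are bounded for the selected offspring.

  By monotonicity an offspring flipping a zero-bit but no one-bit is fitter than x, and then every
  fittest offspring flips a zero-bit. So the selected offspring flips a zero-bit with probability at
  least 1 - (1 - (1-p)^|J| u)^k >= (1-p)^|J| Pr[B], where u is the probability that a single mask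
  flips a zero-bit and Pr[B] = 1 - (1-u)^k.

  For the one-bits, resample a single bit j in J of offspring r. Flipping j only lowers the fitness
  of r, so if r is still selected while another offspring is a clone of x, then r flips a zero-bit
  and without j it would be the unique fittest offspring. Hence the expected number of one-bits
  flipped by the selected offspring is at most p |J| times the sum of the probability that it flips
  a zero-bit and k (1 - (1-p)^n)^(k-1), the expected number of offspring without a clone of x among
  the others.

  Finally p |J| = c (1 - Z^t/n) <= 1, (1-p)^|J| >= e^-2 and k (1 - e^-2)^(k-1) decays exponentially
  in lambda, which gives a1 = e^-2, a2 = 2 e^4 and b = e^-2 / 2.\<close>

section \<open>Expectations over finite distributions and i.i.d. lists\<close>

lemma pmf_expectation_cong:
  fixes f g :: "'a \<Rightarrow> real"
  assumes "\<And>a. a \<in> set_pmf M \<Longrightarrow> f a = g a"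
  shows "measure_pmf.expectation M f = measure_pmf.expectation M g"
  using assms by (intro integral_cong_AE) (auto simp: AE_measure_pmf_iff)

lemma pmf_expectation_mono:
  fixes f g :: "'a \<Rightarrow> real"
  assumes "finite (set_pmf M)" "\<And>a. a \<in> set_pmf M \<Longrightarrow> f a \<le> g a"
  shows "measure_pmf.expectation M f \<le> measure_pmf.expectation M g"
  using assms
  by (intro integral_mono_AE) (auto simp: AE_measure_pmf_iff integrable_measure_pmf_finite)

lemma pmf_expectation_bind_finite:
  fixes h :: "'b \<Rightarrow> real"
  assumes "finite (set_pmf p)" "\<And>a. a \<in> set_pmf p \<Longrightarrow> finite (set_pmf (g a))"
  shows "measure_pmf.expectation (bind_pmf p g) h
       = measure_pmf.expectation p (\<lambda>a. measure_pmf.expectation (g a) h)"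
  using assms
  by (subst pmf_expectation_bind[of "set_pmf p"]) (auto simp: integral_measure_pmf[of "set_pmf p"])

lemma prod_of_bool:
  "finite A \<Longrightarrow> (\<Prod>i\<in>A. of_bool (P i) :: 'a :: comm_semiring_1) = of_bool (\<forall>i\<in>A. P i)"
  by (induction A rule: finite_induct) auto

lemma set_pmf_iid_list: "set_pmf (iid_list q k) \<subseteq> {l. length l = k \<and> set l \<subseteq> set_pmf q}"
  by (induction k) fastforce+

lemma finite_set_pmf_iid_list:
  assumes "finite (set_pmf q)"
  shows "finite (set_pmf (iid_list q k))"
proof (rule finite_subset)
  show "finite {l. set l \<subseteq> set_pmf q \<and> length l = k}"
    using assms by (rule finite_lists_length_eq)
qed (use set_pmf_iid_list in blast)

lemma iid_list_resample:
  "i < k \<Longrightarrow> bind_pmf (iid_list q k) (\<lambda>l. map_pmf (\<lambda>a. l[i := a]) q) = iid_list q k"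
proof (induction k arbitrary: i)
  case (Suc k)
  show ?case
  proof (cases i)
    case 0
    have "list_update (a0 # l) 0 = (\<lambda>a. a # l)" for a0 :: 'a and l
      by auto
    then have "bind_pmf (iid_list q (Suc k)) (\<lambda>l. map_pmf (\<lambda>a. l[i := a]) q)
        = bind_pmf q (\<lambda>_. bind_pmf (iid_list q k) (\<lambda>l. map_pmf (\<lambda>a. a # l) q))"
      using 0 by (simp add: bind_assoc_pmf bind_return_pmf)
    also have "\<dots> = iid_list q (Suc k)"
      by (simp add: bind_pmf_const map_pmf_def bind_commute_pmf[of q])
    finally show ?thesis .
  next
    case (Suc i')
    then have "bind_pmf (iid_list q (Suc k)) (\<lambda>l. map_pmf (\<lambda>a. l[i := a]) q)
        = bind_pmf q (\<lambda>a0. bind_pmf (bind_pmf (iid_list q k) (\<lambda>l. map_pmf (\<lambda>a. l[i' := a]) q))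
            (\<lambda>l. return_pmf (a0 # l)))"
      by (simp add: bind_assoc_pmf bind_return_pmf map_pmf_def)
    also have "\<dots> = iid_list q (Suc k)"
      using Suc.IH[of i'] Suc.prems \<open>i = Suc i'\<close> by simp
    finally show ?thesis .
  qed
qed simp

lemma expectation_iid_list_resample:
  fixes F :: "'a list \<Rightarrow> real"
  assumes "i < k" "finite (set_pmf q)"
  shows "measure_pmf.expectation (iid_list q k) F
       = measure_pmf.expectation (iid_list q k) (\<lambda>l. measure_pmf.expectation q (\<lambda>a. F (l[i := a])))"
proof -
  have "measure_pmf.expectation (iid_list q k) F
      = measure_pmf.expectation (bind_pmf (iid_list q k) (\<lambda>l. map_pmf (\<lambda>a. l[i := a]) q)) F"
    by (simp only: iid_list_resample[OF assms(1)])
  also have "\<dots> = measure_pmf.expectation (iid_list q k)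
      (\<lambda>l. measure_pmf.expectation (map_pmf (\<lambda>a. l[i := a]) q) F)"
    by (rule pmf_expectation_bind_finite) (auto simp: finite_set_pmf_iid_list assms)
  finally show ?thesis by simp
qed

lemma expectation_iid_list_prod:
  fixes g :: "nat \<Rightarrow> 'a \<Rightarrow> real"
  assumes "finite (set_pmf q)"
  shows "measure_pmf.expectation (iid_list q k) (\<lambda>l. \<Prod>i<k. g i (l ! i))
       = (\<Prod>i<k. measure_pmf.expectation q (g i))"
proof (induction k arbitrary: g)
  case (Suc k)
  have "measure_pmf.expectation (iid_list q (Suc k)) (\<lambda>l. \<Prod>i<Suc k. g i (l ! i))
      = measure_pmf.expectation q (\<lambda>a. measure_pmf.expectation
          (bind_pmf (iid_list q k) (\<lambda>l. return_pmf (a # l))) (\<lambda>l. \<Prod>i<Suc k. g i (l ! i)))"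
    by (simp only: iid_list.simps)
      (rule pmf_expectation_bind_finite, auto simp: assms finite_set_pmf_iid_list)
  also have "\<dots> = measure_pmf.expectation q (\<lambda>a. g 0 a *
      measure_pmf.expectation (iid_list q k) (\<lambda>l. \<Prod>i<k. g (Suc i) (l ! i)))"
    by (simp del: prod.lessThan_Suc
        add: pmf_expectation_bind_finite assms finite_set_pmf_iid_list prod.lessThan_Suc_shift)
  also have "\<dots> = (\<Prod>i<Suc k. measure_pmf.expectation q (g i))"
    by (simp del: prod.lessThan_Suc add: Suc.IH[of "\<lambda>i. g (Suc i)"] prod.lessThan_Suc_shift)
  finally show ?case .
qed simp

lemma expectation_iid_list_ex:
  fixes P :: "'a \<Rightarrow> bool"
  assumes "finite (set_pmf q)"
  shows "measure_pmf.expectation (iid_list q k) (\<lambda>l. of_bool (\<exists>i<k. P (l ! i)))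
       = (1 - (1 - measure_pmf.expectation q (\<lambda>a. of_bool (P a))) ^ k :: real)"
proof -
  have int: "integrable (measure_pmf M) (h :: _ \<Rightarrow> real)" if "finite (set_pmf M)" for M h
    using that by (rule integrable_measure_pmf_finite)
  have "measure_pmf.expectation (iid_list q k) (\<lambda>l. of_bool (\<exists>i<k. P (l ! i)))
      = measure_pmf.expectation (iid_list q k) (\<lambda>l. 1 - (\<Prod>i<k. of_bool (\<not> P (l ! i))) :: real)"
    by (rule pmf_expectation_cong) (auto simp: prod_of_bool)
  also have "\<dots> = 1 - (\<Prod>i<k. measure_pmf.expectation q (\<lambda>a. of_bool (\<not> P a)))"
    using expectation_iid_list_prod[OF assms, where g = "\<lambda>_ a. of_bool (\<not> P a)" and k = k]
    by (simp add: int assms finite_set_pmf_iid_list)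
  also have "\<dots> = 1 - (1 - measure_pmf.expectation q (\<lambda>a. of_bool (P a))) ^ k"
    by (simp add: of_bool_not_iff int assms)
  finally show ?thesis .
qed

lemma expectation_iid_bernoulli_no_flip:
  fixes p :: real
  assumes "0 \<le> p" "p \<le> 1"
  shows "measure_pmf.expectation (iid_list (bernoulli_pmf p) n) (\<lambda>m. of_bool (\<forall>i<n. P i \<longrightarrow> \<not> m ! i))
       = (1 - p) ^ card {i. i < n \<and> P i}"
proof -
  have "measure_pmf.expectation (iid_list (bernoulli_pmf p) n) (\<lambda>m. of_bool (\<forall>i<n. P i \<longrightarrow> \<not> m ! i))
      = measure_pmf.expectation (iid_list (bernoulli_pmf p) n)
          (\<lambda>m. \<Prod>i<n. of_bool (P i \<longrightarrow> \<not> m ! i) :: real)"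
    by (rule pmf_expectation_cong) (auto simp: prod_of_bool)
  also have "\<dots> = (\<Prod>i<n. if P i then 1 - p else 1)"
    using assms by (subst expectation_iid_list_prod) (auto intro!: prod.cong)
  also have "\<dots> = (1 - p) ^ card {i. i < n \<and> P i}"
    by (simp add: prod.If_cases Int_def conj_commute)
  finally show ?thesis .
qed

definition mask_upd :: "nat \<Rightarrow> nat \<Rightarrow> bool \<Rightarrow> bool list list \<Rightarrow> bool list list" where
  "mask_upd r j b ms = ms[r := (ms ! r)[j := b]]"

lemma expectation_resample_mask_bit:
  fixes F :: "bool list list \<Rightarrow> real"
  assumes "r < k" "j < n" "0 \<le> p" "p \<le> 1"
  defines "M \<equiv> iid_list (iid_list (bernoulli_pmf p) n) k"
  shows "measure_pmf.expectation M F
       = measure_pmf.expectation M (\<lambda>ms. p * F (mask_upd r j True ms) + (1 - p) * F (mask_upd r j False ms))"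
proof -
  let ?q = "iid_list (bernoulli_pmf p) n"
  let ?G = "\<lambda>ms. p * F (mask_upd r j True ms) + (1 - p) * F (mask_upd r j False ms)"
  have fin: "finite (set_pmf ?q)" by (simp add: finite_set_pmf_iid_list)
  have "measure_pmf.expectation M F
      = measure_pmf.expectation M (\<lambda>ms. measure_pmf.expectation ?q (\<lambda>m. F (ms[r := m])))"
    unfolding M_def by (rule expectation_iid_list_resample[OF assms(1) fin])
  also have "\<dots> = measure_pmf.expectation M (\<lambda>ms. measure_pmf.expectation ?q (\<lambda>m. ?G (ms[r := m])))"
  proof (rule pmf_expectation_cong)
    fix ms assume "ms \<in> set_pmf M"
    then have "length ms = k" using set_pmf_iid_list unfolding M_def by blast
    have "measure_pmf.expectation ?q (\<lambda>m. F (ms[r := m]))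
        = measure_pmf.expectation ?q
            (\<lambda>m. measure_pmf.expectation (bernoulli_pmf p) (\<lambda>b. F (ms[r := m[j := b]])))"
      by (rule expectation_iid_list_resample[OF assms(2)]) simp
    also have "\<dots> = measure_pmf.expectation ?q (\<lambda>m. ?G (ms[r := m]))"
      using assms \<open>length ms = k\<close> by (simp add: mask_upd_def algebra_simps)
    finally show "measure_pmf.expectation ?q (\<lambda>m. F (ms[r := m]))
        = measure_pmf.expectation ?q (\<lambda>m. ?G (ms[r := m]))" .
  qed
  also have "\<dots> = measure_pmf.expectation M ?G"
    unfolding M_def by (rule expectation_iid_list_resample[OF assms(1) fin, symmetric])
  finally show ?thesis .
qed

section \<open>Elementary inequalities\<close>

lemma mult_one_minus_power_le:
  fixes t u :: real
  assumes "0 \<le> t" "t \<le> 1" "0 \<le> u" "u \<le> 1"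
  shows "t * (1 - (1 - u) ^ k) \<le> 1 - (1 - t * u) ^ k"
proof (induction k)
  case (Suc k)
  have "0 \<le> t * (1 - (1 - u) ^ k)" "1 - u \<le> 1 - t * u" "0 \<le> 1 - t * u"
    using assms by (auto simp: power_le_one mult_le_one mult_left_le_one_le)
  have "t * (1 - (1 - u) ^ Suc k) = t * u + (1 - u) * (t * (1 - (1 - u) ^ k))"
    by (simp add: algebra_simps)
  also have "\<dots> \<le> t * u + (1 - t * u) * (t * (1 - (1 - u) ^ k))"
    using \<open>0 \<le> t * (1 - (1 - u) ^ k)\<close> \<open>1 - u \<le> 1 - t * u\<close> by (simp add: mult_right_mono)
  also have "\<dots> \<le> t * u + (1 - t * u) * (1 - (1 - t * u) ^ k)"
    using \<open>0 \<le> 1 - t * u\<close> Suc.IH by (simp add: mult_left_mono)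
  also have "\<dots> = 1 - (1 - t * u) ^ Suc k"
    by (simp add: algebra_simps)
  finally show ?case .
qed simp

lemma exp_neg_two_le_one_minus_power:
  fixes p :: real
  assumes "0 \<le> p" "p \<le> 1/2" "real m * p \<le> 1"
  shows "exp (-2) \<le> (1 - p) ^ m"
proof -
  have "- p - 2 * p\<^sup>2 \<le> ln (1 - p)"
    using assms by (intro ln_one_minus_pos_lower_bound) auto
  moreover have "2 * p\<^sup>2 \<le> p"
    using assms mult_right_mono[of p "1/2" p] by (simp add: power2_eq_square)
  ultimately have "-2 * p \<le> ln (1 - p)" by simp
  then have "-2 \<le> real m * ln (1 - p)"
    using assms mult_left_mono[of "-2 * p" "ln (1 - p)" "real m"] by simp
  also have "\<dots> = ln ((1 - p) ^ m)"
    using assms by (simp add: ln_realpow)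
  finally show ?thesis
    using assms by (simp add: ln_ge_iff)
qed

lemma of_nat_mult_power_le_exp:
  fixes d lam :: real
  assumes "0 < d" "d \<le> 1" "1 \<le> k" "lam - 1/2 \<le> real k"
  shows "real k * (1 - d) ^ (k - 1) \<le> 2 / d * exp (2 - d / 2 * lam)"
proof -
  have "(1 - d) ^ (k - 1) \<le> exp (-d) ^ (k - 1)"
    using assms exp_ge_add_one_self[of "-d"] by (intro power_mono) auto
  also have "\<dots> = exp (- d * (real k - 1))"
    using assms by (simp add: exp_of_nat_mult[symmetric] of_nat_diff algebra_simps)
  finally have decay: "(1 - d) ^ (k - 1) \<le> exp (- d * (real k - 1))" .
  have "d * real k / 2 \<le> exp (d * real k / 2)"
    using exp_ge_add_one_self[of "d * real k / 2"] by linarith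
  then have linear: "real k \<le> 2 / d * exp (d * real k / 2)"
    using assms by (simp add: field_simps)
  have "real k * (1 - d) ^ (k - 1) \<le> 2 / d * exp (d * real k / 2) * exp (- d * (real k - 1))"
    using assms by (intro mult_mono[OF linear decay]) auto
  also have "\<dots> = 2 / d * exp (d - d * real k / 2)"
    by (simp add: mult.assoc exp_add[symmetric] algebra_simps)
  also have "\<dots> \<le> 2 / d * exp (2 - d / 2 * lam)"
  proof -
    have "d * lam \<le> d * real k + d / 2"
      using assms mult_left_mono[of "lam - 1/2" "real k" d] by (simp add: algebra_simps)
    then have "d - d * real k / 2 \<le> 2 - d / 2 * lam"
      using assms by simp
    then show ?thesis
      using assms by (intro mult_left_mono) auto
  qed
  finally show ?thesis .
qed

lemma drift_error_le:
  fixes q y lam :: real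
  assumes "0 \<le> q" "q \<le> 1" "exp (-2) \<le> y" "y \<le> 1" "1 \<le> k" "lam - 1/2 \<le> real k"
  shows "q * (real k * (1 - y) ^ (k - 1)) \<le> 2 * exp 4 * exp (- (exp (-2) / 2) * lam)"
proof -
  have "real k * (1 - y) ^ (k - 1) \<le> real k * (1 - exp (-2)) ^ (k - 1)"
    using assms by (intro mult_left_mono power_mono) auto
  also have "\<dots> \<le> 2 / exp (-2) * exp (2 - exp (-2) / 2 * lam)"
    using assms by (intro of_nat_mult_power_le_exp) auto
  also have "\<dots> = 2 * exp 4 * exp (- (exp (-2) / 2) * lam)"
    by (simp add: exp_minus exp_diff field_simps flip: exp_add)
  finally have "real k * (1 - y) ^ (k - 1) \<le> 2 * exp 4 * exp (- (exp (-2) / 2) * lam)" .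
  moreover have "0 \<le> real k * (1 - y) ^ (k - 1)"
    using assms by simp
  ultimately show ?thesis
    using assms by (meson mult_left_le_one_le order_trans)
qed

section \<open>Selecting a fittest offspring\<close>

definition fittest :: "('a \<Rightarrow> real) \<Rightarrow> 'a list \<Rightarrow> nat set" where
  "fittest f ys = {j. j < length ys \<and> (\<forall>i<length ys. f (ys ! i) \<le> f (ys ! j))}"

definition select_prob :: "('a \<Rightarrow> real) \<Rightarrow> 'a list \<Rightarrow> nat \<Rightarrow> real" where
  "select_prob f ys j = of_bool (j \<in> fittest f ys) / real (card (fittest f ys))"

lemma fittest_subset: "fittest f ys \<subseteq> {..<length ys}"
  by (auto simp: fittest_def)

lemma finite_fittest: "finite (fittest f ys)"
  using fittest_subset by (rule finite_subset) simp

lemma fittest_nonempty: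
  assumes "ys \<noteq> []"
  shows "fittest f ys \<noteq> {}"
proof -
  let ?V = "(\<lambda>i. f (ys ! i)) ` {..<length ys}"
  have "Max ?V \<in> ?V"
    using assms by (intro Max_in) auto
  then obtain j where "j < length ys" "f (ys ! j) = Max ?V"
    by auto
  then have "j \<in> fittest f ys"
    by (auto simp: fittest_def)
  then show ?thesis by blast
qed

lemma fittest_ge: "j \<in> fittest f ys \<Longrightarrow> i < length ys \<Longrightarrow> f (ys ! i) \<le> f (ys ! j)"
  by (simp add: fittest_def)

lemma fittest_update_improved:
  assumes "r \<in> fittest f ys" "f (ys ! r) < f z"
  shows "fittest f (ys[r := z]) = {r}"
proof -
  have r: "r < length ys"
    using assms(1) by (simp add: fittest_def)
  have less: "f (ys[r := z] ! i) < f (ys[r := z] ! r)" if "i < length ys" "i \<noteq> r" for i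
    using fittest_ge[OF assms(1) that(1)] assms(2) r that by simp
  have "f (ys[r := z] ! i) \<le> f (ys[r := z] ! r)" if "i < length ys" for i
    using less[of i] that by (cases "i = r") auto
  then have "r \<in> fittest f (ys[r := z])"
    using r by (simp add: fittest_def)
  moreover have "j = r" if j: "j \<in> fittest f (ys[r := z])" for j
  proof (rule ccontr)
    assume "j \<noteq> r"
    moreover have "j < length ys"
      using j by (simp add: fittest_def)
    moreover have "f (ys[r := z] ! r) \<le> f (ys[r := z] ! j)"
      using fittest_ge[OF j, of r] r by simp
    ultimately show False
      using less[of j] by simp
  qed
  ultimately show ?thesis
    by blast
qed

lemma select_prob_nonneg: "0 \<le> select_prob f ys j"
  by (simp add: select_prob_def)

lemma select_prob_le_one: "select_prob f ys j \<le> 1"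
proof (cases "j \<in> fittest f ys")
  case True
  then have "1 \<le> card (fittest f ys)"
    using finite_fittest by (metis One_nat_def Suc_leI card_gt_0_iff empty_iff)
  then show ?thesis
    using True by (simp add: select_prob_def)
qed (simp add: select_prob_def)

lemma select_prob_eq_one: "fittest f ys = {j} \<Longrightarrow> select_prob f ys j = 1"
  by (simp add: select_prob_def)

lemma sum_select_prob_mult:
  "(\<Sum>j<length ys. select_prob f ys j * h j) = (\<Sum>j\<in>fittest f ys. h j) / real (card (fittest f ys))"
proof -
  have "(\<Sum>j<length ys. select_prob f ys j * h j)
      = (\<Sum>j\<in>{..<length ys} \<inter> fittest f ys. h j / real (card (fittest f ys)))"
    by (simp add: select_prob_def sum.inter_restrict) (rule sum.cong, auto)
  also have "{..<length ys} \<inter> fittest f ys = fittest f ys"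
    using fittest_subset by blast
  finally show ?thesis
    by (simp add: sum_divide_distrib)
qed

lemma sum_select_prob: "ys \<noteq> [] \<Longrightarrow> (\<Sum>j<length ys. select_prob f ys j) = 1"
  using sum_select_prob_mult[of f ys "\<lambda>_. 1"] fittest_nonempty[of ys f] finite_fittest[of f ys]
  by simp

lemma select_best_eq: "select_best f ys = map_pmf (nth ys) (pmf_of_set (fittest f ys))"
  by (simp add: select_best_def fittest_def)

lemma finite_set_pmf_select_best: "ys \<noteq> [] \<Longrightarrow> finite (set_pmf (select_best f ys))"
  by (simp add: select_best_eq fittest_nonempty finite_fittest)

lemma expectation_select_best:
  fixes g :: "bool list \<Rightarrow> real"
  assumes "ys \<noteq> []"
  shows "measure_pmf.expectation (select_best f ys) g = (\<Sum>j<length ys. select_prob f ys j * g (ys ! j))"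
proof -
  have "measure_pmf.expectation (select_best f ys) g
      = (\<Sum>j\<in>fittest f ys. g (ys ! j)) / real (card (fittest f ys))"
    using assms by (simp add: select_best_eq fittest_nonempty finite_fittest integral_pmf_of_set)
  then show ?thesis
    by (simp add: sum_select_prob_mult)
qed

section \<open>Mutation masks and the parent\<close>

definition flips_zero :: "bool list \<Rightarrow> bool list \<Rightarrow> bool" where
  "flips_zero x m \<longleftrightarrow> (\<exists>i<length x. \<not> x ! i \<and> m ! i)"

definition flips_one :: "bool list \<Rightarrow> bool list \<Rightarrow> bool" where
  "flips_one x m \<longleftrightarrow> (\<exists>i<length x. x ! i \<and> m ! i)"

definition zeros_flipped :: "bool list \<Rightarrow> bool list \<Rightarrow> nat" where
  "zeros_flipped x m = card {i. i < length x \<and> \<not> x ! i \<and> m ! i}"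

definition ones_flipped :: "bool list \<Rightarrow> bool list \<Rightarrow> nat" where
  "ones_flipped x m = card {i. i < length x \<and> x ! i \<and> m ! i}"

definition clone_mask :: "bool list \<Rightarrow> bool" where
  "clone_mask m \<longleftrightarrow> (\<forall>i<length m. \<not> m ! i)"

definition clone_among_others :: "nat \<Rightarrow> bool list list \<Rightarrow> bool" where
  "clone_among_others r ms \<longleftrightarrow> (\<exists>i<length ms. i \<noteq> r \<and> clone_mask (ms ! i))"

lemma zeros_flip:
  assumes "length m = length x"
  shows "zeros (flip x m) + zeros_flipped x m = zeros x + ones_flipped x m"
proof -
  let ?Z = "{i. i < length x \<and> \<not> x ! i \<and> \<not> m ! i}"
  have "zeros x = card (?Z \<union> {i. i < length x \<and> \<not> x ! i \<and> m ! i})"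
    by (simp add: zeros_def length_filter_conv_card) (rule arg_cong[where f = card], auto)
  also have "\<dots> = card ?Z + zeros_flipped x m"
    by (subst card_Un_disjoint) (auto simp: zeros_flipped_def)
  finally have x: "zeros x = card ?Z + zeros_flipped x m" .
  have "zeros (flip x m) = card (?Z \<union> {i. i < length x \<and> x ! i \<and> m ! i})"
    using assms by (simp add: zeros_def length_filter_conv_card flip_def)
      (rule arg_cong[where f = card], auto)
  also have "\<dots> = card ?Z + ones_flipped x m"
    by (subst card_Un_disjoint) (auto simp: ones_flipped_def)
  finally show ?thesis
    using x by simp
qed

lemma flips_zero_iff_zeros_flipped: "flips_zero x m \<longleftrightarrow> 0 < zeros_flipped x m"
  by (auto simp: flips_zero_def zeros_flipped_def card_gt_0_iff)

lemma flips_zero_minus_ones_flipped_le: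
  assumes "length m = length x"
  shows "of_bool (flips_zero x m) - real (ones_flipped x m)
       \<le> min 1 (real (zeros x) - real (zeros (flip x m)))"
  using zeros_flip[OF assms] flips_zero_iff_zeros_flipped[of x m] by auto

lemma flips_zero_update_one_bit: "x ! j \<Longrightarrow> flips_zero x (m[j := b]) = flips_zero x m"
  unfolding flips_zero_def by (metis nth_list_update_neq)

locale ea_parent =
  fixes x :: "bool list" and n :: nat and f :: "bool list \<Rightarrow> real"
  assumes length_parent: "length x = n" and monotone: "monotone_pb n f"
begin

abbreviation win :: "nat \<Rightarrow> bool list list \<Rightarrow> real" where
  "win r ms \<equiv> select_prob f (map (flip x) ms) r"

lemma length_flip: "length m = n \<Longrightarrow> length (flip x m) = n"
  using length_parent by (simp add: flip_def)

lemma nth_flip: "i < n \<Longrightarrow> length m = n \<Longrightarrow> flip x m ! i = (x ! i \<noteq> m ! i)"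
  using length_parent by (simp add: flip_def)

lemma flip_eq_parent_iff: "length m = n \<Longrightarrow> flip x m = x \<longleftrightarrow> clone_mask m"
  using length_parent by (auto simp: list_eq_iff_nth_eq length_flip nth_flip clone_mask_def)

lemma fitness_less:
  "length y = n \<Longrightarrow> length z = n \<Longrightarrow> y \<noteq> z \<Longrightarrow> (\<forall>i<n. z ! i \<longrightarrow> y ! i) \<Longrightarrow> f z < f y"
  using monotone by (auto simp: monotone_pb_def)

lemma fitness_flip_less_parent:
  assumes "length m = n" "\<not> flips_zero x m" "\<not> clone_mask m"
  shows "f (flip x m) < f x"
proof (rule fitness_less)
  show "x \<noteq> flip x m"
    using assms flip_eq_parent_iff by metis
  show "\<forall>i<n. flip x m ! i \<longrightarrow> x ! i"
    using assms length_parent by (auto simp: nth_flip flips_zero_def)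
qed (use assms length_parent length_flip in auto)

lemma parent_less_fitness_flip:
  assumes "length m = n" "flips_zero x m" "\<not> flips_one x m"
  shows "f x < f (flip x m)"
proof (rule fitness_less)
  have "\<not> clone_mask m"
    using assms length_parent by (auto simp: flips_zero_def clone_mask_def)
  then show "flip x m \<noteq> x"
    using assms flip_eq_parent_iff by metis
  show "\<forall>i<n. x ! i \<longrightarrow> flip x m ! i"
    using assms length_parent by (auto simp: nth_flip flips_one_def)
qed (use assms length_parent length_flip in auto)

lemma flips_zero_if_not_clone:
  "length m = n \<Longrightarrow> f x \<le> f (flip x m) \<Longrightarrow> \<not> clone_mask m \<Longrightarrow> flips_zero x m"
  using fitness_flip_less_parent by fastforce

lemma flips_zero_if_fitter:
  assumes "length m = n" "f x < f (flip x m)"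
  shows "flips_zero x m"
proof (cases "clone_mask m")
  case True
  then have "flip x m = x"
    using assms(1) flip_eq_parent_iff by blast
  then show ?thesis
    using assms(2) by simp
qed (use assms flips_zero_if_not_clone in auto)

lemma fitness_flip_one_bit_less:
  assumes "length m = n" "j < n" "x ! j"
  shows "f (flip x (m[j := True])) < f (flip x (m[j := False]))"
proof (rule fitness_less)
  show "flip x (m[j := False]) \<noteq> flip x (m[j := True])"
    using assms by (metis length_list_update nth_flip nth_list_update_eq)
  show "\<forall>i<n. flip x (m[j := True]) ! i \<longrightarrow> flip x (m[j := False]) ! i"
    using assms by (auto simp: nth_flip nth_list_update)
qed (use assms length_flip in auto)

lemma winner_flips_zero_if_clone:
  assumes "\<forall>m\<in>set ms. length m = n" "r \<in> fittest f (map (flip x) ms)"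
    and "i < length ms" "clone_mask (ms ! i)" "\<not> clone_mask (ms ! r)"
  shows "flips_zero x (ms ! r)"
proof (rule flips_zero_if_not_clone)
  have r: "r < length ms"
    using assms(2) by (simp add: fittest_def)
  then show "length (ms ! r) = n"
    using assms(1) by simp
  have "flip x (ms ! i) = x"
    using assms flip_eq_parent_iff by simp
  then show "f x \<le> f (flip x (ms ! r))"
    using fittest_ge[OF assms(2), of i] assms r by simp
qed (use assms in auto)

lemma winner_flips_zero_if_improving:
  assumes "\<forall>m\<in>set ms. length m = n" "r \<in> fittest f (map (flip x) ms)"
    and "i < length ms" "flips_zero x (ms ! i)" "\<not> flips_one x (ms ! i)"
  shows "flips_zero x (ms ! r)"
proof (rule flips_zero_if_fitter)
  have r: "r < length ms"
    using assms(2) by (simp add: fittest_def)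
  then show "length (ms ! r) = n"
    using assms(1) by simp
  have "f x < f (flip x (ms ! i))"
    using assms by (intro parent_less_fitness_flip) auto
  then show "f x < f (flip x (ms ! r))"
    using fittest_ge[OF assms(2), of i] assms r by simp
qed

text \<open>Flipping the one-bit j only lowers the fitness of offspring r, and an offspring that is at
  least as fit as a clone of x must flip a zero-bit.\<close>

lemma winner_with_one_bit_flipped:
  assumes ms: "\<forall>m\<in>set ms. length m = n" and r: "r < length ms" and j: "j < n" "x ! j"
    and clone: "clone_among_others r ms"
    and won: "r \<in> fittest f (map (flip x) (mask_upd r j True ms))"
  shows "flips_zero x (ms ! r)" and "win r (mask_upd r j False ms) = 1"
proof -
  define ms1 where "ms1 = mask_upd r j True ms"
  obtain i where i: "i < length ms" "i \<noteq> r" "clone_mask (ms ! i)"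
    using clone by (auto simp: clone_among_others_def)
  have lr: "length (ms ! r) = n"
    using ms r by simp
  have ms1: "ms1 ! r = (ms ! r)[j := True]" "ms1 ! i = ms ! i" "length ms1 = length ms"
    using r i by (simp_all add: ms1_def mask_upd_def)
  have "\<forall>m\<in>set ms1. length m = n"
    using ms lr by (auto simp: ms1_def mask_upd_def dest: set_update_subset_insert[THEN subsetD])
  moreover have "\<not> clone_mask (ms1 ! r)"
    using ms1 j lr by (auto simp: clone_mask_def)
  ultimately have "flips_zero x (ms1 ! r)"
    using winner_flips_zero_if_clone[OF _ won[folded ms1_def], of i] i ms1 by simp
  then show "flips_zero x (ms ! r)"
    using ms1 j flips_zero_update_one_bit by simp
  have "map (flip x) (mask_upd r j False ms) = (map (flip x) ms1)[r := flip x ((ms ! r)[j := False])]"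
    by (simp add: ms1_def mask_upd_def map_update)
  then have "fittest f (map (flip x) (mask_upd r j False ms)) = {r}"
    using fittest_update_improved[OF won[folded ms1_def]] fitness_flip_one_bit_less[OF lr j] r ms1
    by simp
  then show "win r (mask_upd r j False ms) = 1"
    by (simp add: select_prob_eq_one)
qed

lemma win_set_one_bit_le:
  assumes ms: "\<forall>m\<in>set ms. length m = n" and r: "r < length ms" and j: "j < n" "x ! j"
    and p: "0 \<le> p" "p \<le> 1"
  shows "win r (mask_upd r j True ms)
    \<le> (p * win r (mask_upd r j True ms) + (1 - p) * win r (mask_upd r j False ms))
        * of_bool (flips_zero x (ms ! r))
      + of_bool (\<not> clone_among_others r ms)"
proof -
  define a b where "a = win r (mask_upd r j True ms)" and "b = win r (mask_upd r j False ms)"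
  have a: "0 \<le> a" "a \<le> 1" and b: "0 \<le> b"
    by (simp_all add: a_def b_def select_prob_nonneg select_prob_le_one)
  have "a \<le> (p * a + (1 - p) * b) * of_bool (flips_zero x (ms ! r)) + of_bool (\<not> clone_among_others r ms)"
  proof (cases "clone_among_others r ms \<and> r \<in> fittest f (map (flip x) (mask_upd r j True ms))")
    case False
    then have "a \<le> of_bool (\<not> clone_among_others r ms)"
      using a by (auto simp: a_def select_prob_def)
    moreover have "0 \<le> (p * a + (1 - p) * b) * of_bool (flips_zero x (ms ! r))"
      using a b p by simp
    ultimately show ?thesis
      by linarith
  next
    case True
    then have "flips_zero x (ms ! r)" "b = 1"
      using winner_with_one_bit_flipped[OF ms r j] by (auto simp: b_def)
    moreover have "0 \<le> (1 - p) * (1 - a)"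
      using a p by simp
    ultimately show ?thesis
      by (simp add: algebra_simps)
  qed
  then show ?thesis
    by (simp add: a_def b_def)
qed

end

section \<open>One generation\<close>

locale ea_generation = ea_parent +
  fixes p :: real and k :: nat
  assumes p_nonneg: "0 \<le> p" and p_le_one: "p \<le> 1"
begin

abbreviation mask_pmf :: "bool list pmf" where
  "mask_pmf \<equiv> iid_list (bernoulli_pmf p) n"

abbreviation masks_pmf :: "bool list list pmf" where
  "masks_pmf \<equiv> iid_list mask_pmf k"

abbreviation generation :: "(bool list list \<times> bool list) pmf" where
  "generation \<equiv> bind_pmf masks_pmf (\<lambda>ms. map_pmf (\<lambda>x'. (ms, x')) (select_best f (map (flip x) ms)))"

definition one_bits :: "nat set" where
  "one_bits = {i. i < n \<and> x ! i}"

definition zero_bits :: "nat set" where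
  "zero_bits = {i. i < n \<and> \<not> x ! i}"

definition winner_flips_zero :: "bool list list \<Rightarrow> real" where
  "winner_flips_zero ms = (\<Sum>r<k. win r ms * of_bool (flips_zero x (ms ! r)))"

definition winner_ones_flipped :: "bool list list \<Rightarrow> real" where
  "winner_ones_flipped ms = (\<Sum>r<k. win r ms * real (ones_flipped x (ms ! r)))"

lemma finite_mask_pmf: "finite (set_pmf mask_pmf)"
  by (simp add: finite_set_pmf_iid_list)

lemma finite_masks_pmf: "finite (set_pmf masks_pmf)"
  by (simp add: finite_set_pmf_iid_list finite_mask_pmf)

lemma length_mask: "m \<in> set_pmf mask_pmf \<Longrightarrow> length m = n"
  using set_pmf_iid_list by blast

lemma masks_support: "ms \<in> set_pmf masks_pmf \<Longrightarrow> length ms = k \<and> (\<forall>m\<in>set ms. length m = n)"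
  using set_pmf_iid_list[of mask_pmf k] length_mask by blast

lemma integrable_mask_pmf: "integrable (measure_pmf mask_pmf) (h :: _ \<Rightarrow> real)"
  by (rule integrable_measure_pmf_finite[OF finite_mask_pmf])

lemma integrable_masks_pmf: "integrable (measure_pmf masks_pmf) (h :: _ \<Rightarrow> real)"
  by (rule integrable_measure_pmf_finite[OF finite_masks_pmf])

lemma card_zero_bits: "card zero_bits = zeros x"
  using length_parent by (simp add: zeros_def length_filter_conv_card zero_bits_def)

lemma card_one_bits_add_zero_bits: "card one_bits + card zero_bits = n"
proof -
  have "card one_bits + card zero_bits = card (one_bits \<union> zero_bits)"
    by (rule card_Un_disjoint[symmetric]) (auto simp: one_bits_def zero_bits_def)
  also have "one_bits \<union> zero_bits = {..<n}"
    by (auto simp: one_bits_def zero_bits_def)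
  finally show ?thesis
    by simp
qed

lemma ones_flipped_eq_sum: "real (ones_flipped x m) = (\<Sum>j\<in>one_bits. of_bool (m ! j))"
proof -
  have "{i. i < length x \<and> x ! i \<and> m ! i} = one_bits \<inter> {j. m ! j}"
    using length_parent by (auto simp: one_bits_def)
  then show ?thesis
    by (simp add: ones_flipped_def one_bits_def)
qed

lemma prob_clone_mask: "measure_pmf.expectation mask_pmf (\<lambda>m. of_bool (clone_mask m)) = (1 - p) ^ n"
proof -
  have "measure_pmf.expectation mask_pmf (\<lambda>m. of_bool (clone_mask m))
      = measure_pmf.expectation mask_pmf (\<lambda>m. of_bool (\<forall>i<n. True \<longrightarrow> \<not> m ! i) :: real)"
    by (rule pmf_expectation_cong) (simp add: clone_mask_def length_mask)
  also have "\<dots> = (1 - p) ^ card {i. i < n \<and> True}"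
    by (rule expectation_iid_bernoulli_no_flip[OF p_nonneg p_le_one])
  finally show ?thesis
    by simp
qed

lemma prob_not_flips_zero:
  "measure_pmf.expectation mask_pmf (\<lambda>m. of_bool (\<not> flips_zero x m)) = (1 - p) ^ card zero_bits"
proof -
  have "measure_pmf.expectation mask_pmf (\<lambda>m. of_bool (\<not> flips_zero x m))
      = measure_pmf.expectation mask_pmf (\<lambda>m. of_bool (\<forall>i<n. \<not> x ! i \<longrightarrow> \<not> m ! i) :: real)"
    by (rule pmf_expectation_cong) (auto simp: flips_zero_def length_parent)
  also have "\<dots> = (1 - p) ^ card zero_bits"
    unfolding zero_bits_def by (rule expectation_iid_bernoulli_no_flip[OF p_nonneg p_le_one])
  finally show ?thesis .
qed

lemma prob_not_flips_one:
  "measure_pmf.expectation mask_pmf (\<lambda>m. of_bool (\<not> flips_one x m)) = (1 - p) ^ card one_bits"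
proof -
  have "measure_pmf.expectation mask_pmf (\<lambda>m. of_bool (\<not> flips_one x m))
      = measure_pmf.expectation mask_pmf (\<lambda>m. of_bool (\<forall>i<n. x ! i \<longrightarrow> \<not> m ! i) :: real)"
    by (rule pmf_expectation_cong) (auto simp: flips_one_def length_parent)
  also have "\<dots> = (1 - p) ^ card one_bits"
    unfolding one_bits_def by (rule expectation_iid_bernoulli_no_flip[OF p_nonneg p_le_one])
  finally show ?thesis .
qed

lemma prob_flips_zero:
  "measure_pmf.expectation mask_pmf (\<lambda>m. of_bool (flips_zero x m)) = 1 - (1 - p) ^ card zero_bits"
  using prob_not_flips_zero by (simp add: of_bool_not_iff integrable_mask_pmf)

lemma prob_improving_mask:
  "measure_pmf.expectation mask_pmf (\<lambda>m. of_bool (flips_zero x m \<and> \<not> flips_one x m))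
     = (1 - p) ^ card one_bits * (1 - (1 - p) ^ card zero_bits)"
proof -
  have "measure_pmf.expectation mask_pmf (\<lambda>m. of_bool (flips_zero x m \<and> \<not> flips_one x m))
      = measure_pmf.expectation mask_pmf (\<lambda>m. of_bool (\<not> flips_one x m) - of_bool (clone_mask m) :: real)"
    by (rule pmf_expectation_cong)
      (auto simp: flips_zero_def flips_one_def clone_mask_def length_mask length_parent)
  also have "\<dots> = (1 - p) ^ card one_bits - (1 - p) ^ n"
    by (simp add: integrable_mask_pmf prob_clone_mask prob_not_flips_one)
  also have "\<dots> = (1 - p) ^ card one_bits * (1 - (1 - p) ^ card zero_bits)"
    using card_one_bits_add_zero_bits by (metis power_add right_diff_distrib mult.right_neutral)
  finally show ?thesis .
qed

lemma prob_no_other_clone: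
  assumes "r < k"
  shows "measure_pmf.expectation masks_pmf (\<lambda>ms. of_bool (\<not> clone_among_others r ms))
       = (1 - (1 - p) ^ n) ^ (k - 1)"
proof -
  have "measure_pmf.expectation masks_pmf (\<lambda>ms. of_bool (\<not> clone_among_others r ms))
      = measure_pmf.expectation masks_pmf
          (\<lambda>ms. \<Prod>i<k. of_bool (i = r \<or> \<not> clone_mask (ms ! i)) :: real)"
    by (rule pmf_expectation_cong, subst prod_of_bool)
      (auto simp: clone_among_others_def dest: masks_support)
  also have "\<dots> = (\<Prod>i<k. measure_pmf.expectation mask_pmf (\<lambda>m. of_bool (i = r \<or> \<not> clone_mask m)))"
    by (rule expectation_iid_list_prod[OF finite_mask_pmf])
  also have "\<dots> = (\<Prod>i\<in>{..<k} - {r}. 1 - (1 - p) ^ n)"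
    by (rule prod.mono_neutral_cong_right)
      (auto simp: of_bool_not_iff integrable_mask_pmf prob_clone_mask)
  also have "\<dots> = (1 - (1 - p) ^ n) ^ (k - 1)"
    using assms by simp
  finally show ?thesis .
qed

lemma expectation_win_flips_one_bit_le:
  assumes "r < k" "j \<in> one_bits"
  shows "measure_pmf.expectation masks_pmf (\<lambda>ms. win r ms * of_bool (ms ! r ! j))
    \<le> p * (measure_pmf.expectation masks_pmf (\<lambda>ms. win r ms * of_bool (flips_zero x (ms ! r)))
           + measure_pmf.expectation masks_pmf (\<lambda>ms. of_bool (\<not> clone_among_others r ms)))"
proof -
  have j: "j < n" "x ! j"
    using assms by (auto simp: one_bits_def)
  let ?E = "measure_pmf.expectation masks_pmf"
  let ?a = "\<lambda>ms. win r (mask_upd r j True ms)" and ?b = "\<lambda>ms. win r (mask_upd r j False ms)"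
  have nth_mask_upd: "mask_upd r j b ms ! r = (ms ! r)[j := b]"
    and length_nth: "length (ms ! r) = n" if "ms \<in> set_pmf masks_pmf" for ms b
    using masks_support[OF that] assms by (auto simp: mask_upd_def)
  have "?E (\<lambda>ms. win r ms * of_bool (ms ! r ! j))
      = ?E (\<lambda>ms. p * (?a ms * of_bool (mask_upd r j True ms ! r ! j))
             + (1 - p) * (?b ms * of_bool (mask_upd r j False ms ! r ! j)))"
    by (rule expectation_resample_mask_bit[OF assms(1) j(1) p_nonneg p_le_one])
  also have "\<dots> = ?E (\<lambda>ms. p * ?a ms)"
    by (rule pmf_expectation_cong) (simp add: nth_mask_upd length_nth j)
  also have "\<dots> \<le> ?E (\<lambda>ms. p * ((p * ?a ms + (1 - p) * ?b ms) * of_bool (flips_zero x (ms ! r))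
                     + of_bool (\<not> clone_among_others r ms)))"
  proof (rule pmf_expectation_mono[OF finite_masks_pmf])
    fix ms assume "ms \<in> set_pmf masks_pmf"
    then show "p * ?a ms \<le> p * ((p * ?a ms + (1 - p) * ?b ms) * of_bool (flips_zero x (ms ! r))
                     + of_bool (\<not> clone_among_others r ms))"
      using masks_support assms j p_nonneg p_le_one
      by (intro mult_left_mono win_set_one_bit_le) auto
  qed
  also have "\<dots> = p * (?E (\<lambda>ms. (p * ?a ms + (1 - p) * ?b ms) * of_bool (flips_zero x (ms ! r)))
                   + ?E (\<lambda>ms. of_bool (\<not> clone_among_others r ms)))"
    by (simp add: integrable_masks_pmf)
  also have "?E (\<lambda>ms. (p * ?a ms + (1 - p) * ?b ms) * of_bool (flips_zero x (ms ! r)))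
      = ?E (\<lambda>ms. p * (?a ms * of_bool (flips_zero x (mask_upd r j True ms ! r)))
             + (1 - p) * (?b ms * of_bool (flips_zero x (mask_upd r j False ms ! r))))"
    by (rule pmf_expectation_cong) (simp add: nth_mask_upd flips_zero_update_one_bit j algebra_simps)
  also have "\<dots> = ?E (\<lambda>ms. win r ms * of_bool (flips_zero x (ms ! r)))"
    by (rule expectation_resample_mask_bit[OF assms(1) j(1) p_nonneg p_le_one, symmetric])
  finally show ?thesis .
qed

lemma expectation_winner_ones_flipped_le:
  "measure_pmf.expectation masks_pmf winner_ones_flipped
     \<le> p * card one_bits * (measure_pmf.expectation masks_pmf winner_flips_zero
                            + k * (1 - (1 - p) ^ n) ^ (k - 1))"
proof -
  let ?E = "measure_pmf.expectation masks_pmf"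
  let ?Z = "\<lambda>r. ?E (\<lambda>ms. win r ms * of_bool (flips_zero x (ms ! r)))"
  have "?E winner_ones_flipped
      = ?E (\<lambda>ms. \<Sum>r<k. \<Sum>j\<in>one_bits. win r ms * of_bool (ms ! r ! j))"
    by (rule pmf_expectation_cong) (simp add: winner_ones_flipped_def ones_flipped_eq_sum sum_distrib_left)
  also have "\<dots> = (\<Sum>r<k. \<Sum>j\<in>one_bits. ?E (\<lambda>ms. win r ms * of_bool (ms ! r ! j)))"
    by (simp add: integrable_masks_pmf)
  also have "\<dots> \<le> (\<Sum>r<k. \<Sum>j\<in>one_bits. p * (?Z r + (1 - (1 - p) ^ n) ^ (k - 1)))"
  proof (intro sum_mono)
    fix r j assume "r \<in> {..<k}" "j \<in> one_bits"
    then show "?E (\<lambda>ms. win r ms * of_bool (ms ! r ! j)) \<le> p * (?Z r + (1 - (1 - p) ^ n) ^ (k - 1))"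
      using expectation_win_flips_one_bit_le[of r j] prob_no_other_clone[of r] by simp
  qed
  also have "\<dots> = p * card one_bits * ((\<Sum>r<k. ?Z r) + k * (1 - (1 - p) ^ n) ^ (k - 1))"
    by (simp add: sum_distrib_left sum.distrib algebra_simps)
  also have "(\<Sum>r<k. ?Z r) = ?E winner_flips_zero"
    by (simp add: winner_flips_zero_def[abs_def] integrable_masks_pmf del: sum_mult_of_bool_eq)
  finally show ?thesis .
qed

lemma improving_offspring_le_winner_flips_zero:
  assumes "ms \<in> set_pmf masks_pmf"
  shows "of_bool (\<exists>i<k. flips_zero x (ms ! i) \<and> \<not> flips_one x (ms ! i)) \<le> winner_flips_zero ms"
proof (cases "\<exists>i<k. flips_zero x (ms ! i) \<and> \<not> flips_one x (ms ! i)")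
  case True
  then obtain i where i: "i < k" "flips_zero x (ms ! i)" "\<not> flips_one x (ms ! i)"
    by blast
  have k: "length ms = k" and lengths: "\<forall>m\<in>set ms. length m = n"
    using masks_support[OF assms] by auto
  have "winner_flips_zero ms = (\<Sum>r<k. win r ms)"
    unfolding winner_flips_zero_def
  proof (rule sum.cong[OF refl])
    fix r
    show "win r ms * of_bool (flips_zero x (ms ! r)) = win r ms"
    proof (cases "r \<in> fittest f (map (flip x) ms)")
      case True
      then have "flips_zero x (ms ! r)"
        using winner_flips_zero_if_improving[OF lengths True, of i] i k by simp
      then show ?thesis
        by simp
    qed (simp add: select_prob_def)
  qed
  also have "\<dots> = 1"
  proof -
    have "ms \<noteq> []"
      using i k by auto
    then show ?thesis
      using sum_select_prob[of "map (flip x) ms" f] k by simp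
  qed
  finally show ?thesis
    using True by simp
next
  case False
  have "0 \<le> winner_flips_zero ms"
    unfolding winner_flips_zero_def by (intro sum_nonneg mult_nonneg_nonneg select_prob_nonneg) simp
  moreover have "of_bool (\<exists>i<k. flips_zero x (ms ! i) \<and> \<not> flips_one x (ms ! i)) = (0 :: real)"
    using False by simp
  ultimately show ?thesis
    by linarith
qed

lemma expectation_winner_flips_zero_ge:
  "1 - (1 - (1 - p) ^ card one_bits * (1 - (1 - p) ^ card zero_bits)) ^ k
     \<le> measure_pmf.expectation masks_pmf winner_flips_zero"
proof -
  have "1 - (1 - (1 - p) ^ card one_bits * (1 - (1 - p) ^ card zero_bits)) ^ k
      = measure_pmf.expectation masks_pmf
          (\<lambda>ms. of_bool (\<exists>i<k. flips_zero x (ms ! i) \<and> \<not> flips_one x (ms ! i)))"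
    using expectation_iid_list_ex[OF finite_mask_pmf, where P = "\<lambda>m. flips_zero x m \<and> \<not> flips_one x m" and k = k]
    by (simp add: prob_improving_mask)
  also have "\<dots> \<le> measure_pmf.expectation masks_pmf winner_flips_zero"
    by (rule pmf_expectation_mono[OF finite_masks_pmf improving_offspring_le_winner_flips_zero])
  finally show ?thesis .
qed

lemma expectation_generation:
  fixes \<phi> :: "bool list list \<times> bool list \<Rightarrow> real"
  assumes "1 \<le> k"
  shows "measure_pmf.expectation generation \<phi>
       = measure_pmf.expectation masks_pmf (\<lambda>ms. \<Sum>r<k. win r ms * \<phi> (ms, flip x (ms ! r)))"
proof -
  have ne: "ms \<noteq> []" and k: "length ms = k" if "ms \<in> set_pmf masks_pmf" for ms
    using masks_support[OF that] assms by auto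
  have "measure_pmf.expectation generation \<phi>
      = measure_pmf.expectation masks_pmf (\<lambda>ms. measure_pmf.expectation
          (map_pmf (\<lambda>x'. (ms, x')) (select_best f (map (flip x) ms))) \<phi>)"
    by (rule pmf_expectation_bind_finite[OF finite_masks_pmf]) (auto simp: finite_set_pmf_select_best ne)
  also have "\<dots> = measure_pmf.expectation masks_pmf (\<lambda>ms. \<Sum>r<k. win r ms * \<phi> (ms, flip x (ms ! r)))"
    by (rule pmf_expectation_cong) (simp add: expectation_select_best ne k)
  finally show ?thesis .
qed

lemma expectation_generation_ge:
  fixes \<phi> :: "bool list list \<times> bool list \<Rightarrow> real"
  assumes "1 \<le> k"
    and \<phi>: "\<And>ms m. length m = n \<Longrightarrow> of_bool (flips_zero x m) - real (ones_flipped x m) \<le> \<phi> (ms, flip x m)"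
  shows "measure_pmf.expectation masks_pmf winner_flips_zero
       - measure_pmf.expectation masks_pmf winner_ones_flipped \<le> measure_pmf.expectation generation \<phi>"
proof -
  have "measure_pmf.expectation masks_pmf winner_flips_zero
      - measure_pmf.expectation masks_pmf winner_ones_flipped
      = measure_pmf.expectation masks_pmf (\<lambda>ms. winner_flips_zero ms - winner_ones_flipped ms)"
    by (simp add: integrable_masks_pmf)
  also have "\<dots> = measure_pmf.expectation masks_pmf (\<lambda>ms. \<Sum>r<k. win r ms
          * (of_bool (flips_zero x (ms ! r)) - real (ones_flipped x (ms ! r))))"
    by (simp add: winner_flips_zero_def winner_ones_flipped_def sum_subtractf right_diff_distrib)
  also have "\<dots> \<le> measure_pmf.expectation masks_pmf (\<lambda>ms. \<Sum>r<k. win r ms * \<phi> (ms, flip x (ms ! r)))"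
    using masks_support
    by (intro pmf_expectation_mono[OF finite_masks_pmf] sum_mono mult_left_mono \<phi> select_prob_nonneg)
      auto
  also have "\<dots> = measure_pmf.expectation generation \<phi>"
    by (rule expectation_generation[OF assms(1), symmetric])
  finally show ?thesis .
qed

lemma prob_generation_event_B:
  "measure_pmf.prob generation (event_B n x \<times> UNIV) = 1 - ((1 - p) ^ card zero_bits) ^ k"
proof -
  have "map_pmf fst generation = masks_pmf"
    by (simp add: map_bind_pmf map_pmf_comp map_pmf_const bind_return_pmf')
  then have "measure_pmf.prob generation (event_B n x \<times> UNIV) = measure_pmf.prob masks_pmf (event_B n x)"
    by (metis measure_map_pmf vimage_fst)
  also have "\<dots> = measure_pmf.expectation masks_pmf (\<lambda>ms. of_bool (\<exists>i<k. flips_zero x (ms ! i)))"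
  proof -
    have "ms \<in> event_B n x \<longleftrightarrow> (\<exists>i<k. flips_zero x (ms ! i))" if "ms \<in> set_pmf masks_pmf" for ms
    proof
      assume "ms \<in> event_B n x"
      then obtain m i where "m \<in> set ms" "i < n" "\<not> x ! i" "m ! i"
        by (auto simp: event_B_def)
      moreover from \<open>m \<in> set ms\<close> obtain r where "r < length ms" "ms ! r = m"
        by (auto simp: in_set_conv_nth)
      ultimately show "\<exists>r<k. flips_zero x (ms ! r)"
        using masks_support[OF that] length_parent unfolding flips_zero_def by blast
    next
      assume "\<exists>r<k. flips_zero x (ms ! r)"
      then obtain r i where "r < k" "i < n" "\<not> x ! i" "ms ! r ! i"
        using length_parent by (auto simp: flips_zero_def)
      moreover have "ms ! r \<in> set ms"
        using masks_support[OF that] \<open>r < k\<close> by simp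
      ultimately show "ms \<in> event_B n x"
        unfolding event_B_def by blast
    qed
    then have "measure_pmf.expectation masks_pmf (indicator (event_B n x))
        = measure_pmf.expectation masks_pmf (\<lambda>ms. of_bool (\<exists>i<k. flips_zero x (ms ! i)) :: real)"
      by (intro pmf_expectation_cong) (simp add: indicator_def)
    then show ?thesis
      by simp
  qed
  also have "\<dots> = 1 - ((1 - p) ^ card zero_bits) ^ k"
    using expectation_iid_list_ex[OF finite_mask_pmf, where P = "flips_zero x" and k = k] by (simp add: prob_flips_zero)
  finally show ?thesis .
qed

lemma generation_drift_ge:
  fixes \<phi> :: "bool list list \<times> bool list \<Rightarrow> real"
  assumes "1 \<le> k" "p * card one_bits \<le> 1"
    and "\<And>ms m. length m = n \<Longrightarrow> of_bool (flips_zero x m) - real (ones_flipped x m) \<le> \<phi> (ms, flip x m)"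
  shows "(1 - p) ^ card one_bits * measure_pmf.prob generation (event_B n x \<times> UNIV) * (1 - p * card one_bits)
       - p * card one_bits * (k * (1 - (1 - p) ^ n) ^ (k - 1))
     \<le> measure_pmf.expectation generation \<phi>"
proof -
  let ?t = "(1 - p) ^ card one_bits" and ?u = "1 - (1 - p) ^ card zero_bits"
  let ?q = "p * card one_bits" and ?err = "k * (1 - (1 - p) ^ n) ^ (k - 1)"
  let ?Z = "measure_pmf.expectation masks_pmf winner_flips_zero"
  have "?t * measure_pmf.prob generation (event_B n x \<times> UNIV) = ?t * (1 - (1 - ?u) ^ k)"
    by (simp add: prob_generation_event_B)
  also have "\<dots> \<le> 1 - (1 - ?t * ?u) ^ k"
    using p_nonneg p_le_one by (intro mult_one_minus_power_le) (auto simp: power_le_one)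
  also have "\<dots> \<le> ?Z"
    by (rule expectation_winner_flips_zero_ge)
  finally have "?t * measure_pmf.prob generation (event_B n x \<times> UNIV) * (1 - ?q) - ?q * ?err
      \<le> ?Z * (1 - ?q) - ?q * ?err"
    using assms(2) by (simp add: mult_right_mono)
  also have "\<dots> = ?Z - ?q * (?Z + ?err)"
    by (simp add: algebra_simps)
  also have "\<dots> \<le> ?Z - measure_pmf.expectation masks_pmf winner_ones_flipped"
    using expectation_winner_ones_flipped_le by simp
  also have "\<dots> \<le> measure_pmf.expectation generation \<phi>"
    by (rule expectation_generation_ge[OF assms(1,3)])
  finally show ?thesis .
qed

lemma generation_drift_ge_exp:
  fixes \<phi> :: "bool list list \<times> bool list \<Rightarrow> real"
  assumes k: "1 \<le> k" "lam - 1/2 \<le> real k"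
    and p: "real n * p \<le> 1" "card one_bits = 0 \<or> p \<le> 1/2"
    and \<phi>: "\<And>ms m. length m = n \<Longrightarrow> of_bool (flips_zero x m) - real (ones_flipped x m) \<le> \<phi> (ms, flip x m)"
  shows "measure_pmf.prob generation (event_B n x \<times> UNIV) * exp (-2) * (1 - p * card one_bits)
         - 2 * exp 4 * exp (- (exp (-2) / 2) * lam)
       \<le> measure_pmf.expectation generation \<phi>"
proof -
  let ?B = "measure_pmf.prob generation (event_B n x \<times> UNIV)"
  have "p * card one_bits \<le> p * n"
    using card_one_bits_add_zero_bits p_nonneg by (intro mult_left_mono) auto
  then have q: "0 \<le> p * card one_bits" "p * card one_bits \<le> 1"
    using p p_nonneg by (auto simp: mult.commute)
  have "exp (-2) \<le> (1 - p) ^ card one_bits"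
    using p q p_nonneg by (auto intro: exp_neg_two_le_one_minus_power simp: mult.commute)
  then have "?B * exp (-2) * (1 - p * card one_bits) \<le> ?B * (1 - p) ^ card one_bits * (1 - p * card one_bits)"
    using q by (intro mult_right_mono mult_left_mono) auto
  then have bound: "?B * exp (-2) * (1 - p * card one_bits)
      \<le> (1 - p) ^ card one_bits * ?B * (1 - p * card one_bits)"
    by (simp only: mult.commute[of ?B "(1 - p) ^ card one_bits"])
  have "p * card one_bits * (k * (1 - (1 - p) ^ n) ^ (k - 1))
      \<le> 2 * exp 4 * exp (- (exp (-2) / 2) * lam)"
    using p(2)
  proof
    assume "p \<le> 1/2"
    then have "exp (-2) \<le> (1 - p) ^ n"
      using p p_nonneg by (intro exp_neg_two_le_one_minus_power) auto
    then show ?thesis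
      using q k p_nonneg p_le_one by (intro drift_error_le) (auto simp: power_le_one)
  qed simp
  with bound show ?thesis
    using generation_drift_ge[OF k(1) q(2) \<phi>] by linarith
qed

end

lemma ea_step_drift_ge:
  fixes \<phi> :: "bool list list \<times> bool list \<Rightarrow> real"
  assumes c: "0 < c" "c \<le> 1" and x: "length x = n" "0 < zeros x"
    and lam: "1 \<le> lam" and f: "monotone_pb n f"
    and \<phi>: "\<And>ms m. length m = n \<Longrightarrow> of_bool (flips_zero x m) - real (ones_flipped x m) \<le> \<phi> (ms, flip x m)"
  shows "measure_pmf.prob (ea_step c n x lam f) (event_B n x \<times> UNIV) * exp (-2)
           * (1 - c * (1 - real (zeros x) / real n))
         - 2 * exp 4 * exp (- (exp (-2) / 2) * lam)
       \<le> measure_pmf.expectation (ea_step c n x lam f) \<phi>"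
proof -
  define p k where "p = c / real n" and "k = nat (round lam)"
  have "zeros x \<le> n"
    using x length_filter_le[of Not x] by (simp add: zeros_def)
  then have n: "1 \<le> n"
    using x by simp
  have p: "0 \<le> p" "p \<le> 1" "real n * p \<le> 1"
    using c n by (simp_all add: p_def field_simps)
  interpret ea_generation x n f p k
    by unfold_locales (use x f p in auto)
  have round: "lam - 1/2 \<le> real_of_int (round lam)"
    using abs_le_D2[OF of_int_round_abs_le[of lam]] by linarith
  then have "1 \<le> round lam"
    using lam by linarith
  then have k: "1 \<le> k" "lam - 1/2 \<le> real k"
    using round by (simp_all add: k_def)
  have "card one_bits = 0 \<or> p \<le> 1/2"
    using card_one_bits_add_zero_bits card_zero_bits x c by (auto simp: p_def field_simps)
  note drift = generation_drift_ge_exp[OF k p(3) this \<phi>]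
  have "real (card one_bits) = real n - real (zeros x)"
    using card_one_bits_add_zero_bits card_zero_bits by (simp flip: of_nat_add)
  then have "p * card one_bits = c * (1 - real (zeros x) / real n)"
    using n by (simp add: p_def diff_divide_distrib right_diff_distrib)
  moreover have "ea_step c n x lam f = generation"
    by (simp add: ea_step_def p_def k_def)
  ultimately show ?thesis
    using drift by simp
qed

theorem mainTheorem10:
  fixes c :: real
  assumes "0 < c" "c \<le> 1"
  shows "\<exists>a1 a2 b :: real. a1 > 0 \<and> a2 > 0 \<and> b > 0 \<and>
    (\<forall>(n::nat) (x::bool list) (lam::real) (f::bool list \<Rightarrow> real).
       length x = n \<longrightarrow> zeros x > 0 \<longrightarrow> lam \<ge> 1 \<longrightarrow> monotone_pb n f \<longrightarrow>
       (let P = ea_step c n x lam f;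
            bound = measure_pmf.prob P (event_B n x \<times> UNIV)
                      * a1 * (1 - c * (1 - real (zeros x) / real n))
                    - a2 * exp (- b * lam)
        in measure_pmf.expectation P (\<lambda>(ms, x'). real (zeros x) - real (zeros x')) \<ge> bound
         \<and> measure_pmf.expectation P (\<lambda>(ms, x'). min 1 (real (zeros x) - real (zeros x'))) \<ge> bound))"
proof (rule exI[of _ "exp (-2)"], rule exI[of _ "2 * exp 4"], rule exI[of _ "exp (-2) / 2"],
    intro conjI allI impI)
  fix n :: nat and x :: "bool list" and lam :: real and f :: "bool list \<Rightarrow> real"
  assume setting: "length x = n" "0 < zeros x" "1 \<le> lam" "monotone_pb n f"
  have gain: "of_bool (flips_zero x m) - real (ones_flipped x m)
      \<le> min 1 (real (zeros x) - real (zeros (flip x m)))" if "length m = n" for m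
    using flips_zero_minus_ones_flipped_le that setting(1) by simp
  show "let P = ea_step c n x lam f;
            bound = measure_pmf.prob P (event_B n x \<times> UNIV)
                      * exp (-2) * (1 - c * (1 - real (zeros x) / real n))
                    - 2 * exp 4 * exp (- (exp (-2) / 2) * lam)
        in measure_pmf.expectation P (\<lambda>(ms, x'). real (zeros x) - real (zeros x')) \<ge> bound
         \<and> measure_pmf.expectation P (\<lambda>(ms, x'). min 1 (real (zeros x) - real (zeros x'))) \<ge> bound"
    unfolding Let_def using gain
    by (intro conjI ea_step_drift_ge[OF assms setting]) (auto intro: order_trans[OF _ min.cobounded2])
qed simp_all

end
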